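(* Let $\lambda=(\lambda_1,\dots,\lambda_n)\in\mathbb{R}^n$ with $\lambda_1+\dots+\lambda_n>0$, and suppose there is no partition $\{I_1,I_2\}$ of $\{1,\dots,n\}$ with $s_{I_1}(\lambda)>0$ and $s_{I_2}(\lambda)>0$. Then $|\mathfrak{S}(\lambda)|=(n-1)!$.
   Context: $s_J(\lambda)=\sum_{i\in J}\lambda_i$. $\mathfrak{S}_n$ acts on $\mathbb{R}^n$ by $\sigma(\lambda)=(\lambda_{\sigma^{-1}(1)},\dots,\lambda_{\sigma^{-1}(n)})$. For $\mu\in\mathbb{R}^n$, $\mu>0$ means $\mu_1+\dots+\mu_i>0$ for all $i$. $\mathfrak{S}(\lambda)=\{\sigma\in\mathfrak{S}_n:\sigma(\lambda)>0\}$. *)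

theory Defs
  imports Complex_Main "HOL-Combinatorics.Permutations"
begin

text \<open>Vectors in R^n are modelled as functions nat => real, indexed by {1..n}.\<close>

definition s_sum :: "nat set \<Rightarrow> (nat \<Rightarrow> real) \<Rightarrow> real" where
  "s_sum J lam = (\<Sum>i\<in>J. lam i)"

definition perm_act :: "(nat \<Rightarrow> nat) \<Rightarrow> (nat \<Rightarrow> real) \<Rightarrow> (nat \<Rightarrow> real)" where
  "perm_act \<sigma> lam = (\<lambda>i. lam (inv \<sigma> i))"

definition pos_vec :: "nat \<Rightarrow> (nat \<Rightarrow> real) \<Rightarrow> bool" where
  "pos_vec n mu \<longleftrightarrow> (\<forall>i\<in>{1..n}. (\<Sum>j=1..i. mu j) > 0)"

definition S_set :: "nat \<Rightarrow> (nat \<Rightarrow> real) \<Rightarrow> (nat \<Rightarrow> nat) set" where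
  "S_set n lam = {\<sigma>. \<sigma> permutes {1..n} \<and> pos_vec n (perm_act \<sigma> lam)}"

end

theory Submission
  imports Defs
begin

text \<open>
  Cycle lemma. Let \<open>P k = a\<^sub>1 + \<dots> + a\<^sub>k\<close>. If \<open>P n > 0\<close>, the rotation starting right after the
  last minimum of \<open>P 0, \<dots>, P (n - 1)\<close> has all partial sums positive. Two such rotations
  starting after \<open>c < c'\<close> would give \<open>P c' - P c > 0\<close> and \<open>P n - (P c' - P c) > 0\<close>, i.e. a
  splitting of \<open>{1..n}\<close> into the block \<open>{c+1..c'}\<close> and its complement, both of positive sum.
  Without such splittings the good rotation is unique, so each orbit of the free action of
  the \<open>n\<close> rotations on the \<open>n!\<close> arrangements \<open>\<lambda> \<circ> \<tau>\<close> contains exactly one positive vector.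
\<close>

definition rotation :: "nat \<Rightarrow> nat \<Rightarrow> nat \<Rightarrow> nat" where
  "rotation n c i = (if i \<in> {1..n} then if i + c \<le> n then i + c else i + c - n else i)"

lemma rotation_permutes:
  assumes "c < n"
  shows "rotation n c permutes {1..n}"
proof (rule bij_imp_permutes)
  have inj: "inj_on (rotation n c) {1..n}"
    by (rule inj_onI) (auto simp: rotation_def split: if_splits)
  moreover have "rotation n c ` {1..n} \<subseteq> {1..n}"
    using assms by (auto simp: rotation_def)
  ultimately have "rotation n c ` {1..n} = {1..n}"
    using endo_inj_surj by blast
  with inj show "bij_betw (rotation n c) {1..n} {1..n}"
    by (simp add: bij_betw_def)
qed (auto simp: rotation_def)

lemma sum_rotation_prefix:
  fixes a :: "nat \<Rightarrow> 'a::ab_group_add"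
  assumes "c < n" "i \<le> n"
  shows "(\<Sum>j=1..i. a (rotation n c j)) =
    (if c + i \<le> n then (\<Sum>j=1..c+i. a j) - (\<Sum>j=1..c. a j)
     else (\<Sum>j=1..n. a j) - (\<Sum>j=1..c. a j) + (\<Sum>j=1..c+i-n. a j))"
  using assms(2)
proof (induction i)
  case 0
  then show ?case
    using assms(1) by simp
next
  case (Suc i)
  consider "c + Suc i \<le> n" | "c + i = n" | "c + i > n"
    by linarith
  then show ?case
  proof cases
    case 1
    then have "rotation n c (Suc i) = Suc (c + i)"
      by (simp add: rotation_def)
    with 1 Suc show ?thesis by simp
  next
    case 2
    then have "rotation n c (Suc i) = 1" "c + Suc i - n = 1"
      using Suc.prems by (auto simp: rotation_def)
    with 2 Suc show ?thesis by simp
  next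
    case 3
    then have "rotation n c (Suc i) = Suc (c + i - n)" "c + Suc i - n = Suc (c + i - n)"
      using Suc.prems by (auto simp: rotation_def)
    with 3 Suc show ?thesis by simp
  qed
qed

lemma positive_rotation_exists:
  assumes "(\<Sum>j=1..n. a j) > 0"
  shows "\<exists>c<n. pos_vec n (a \<circ> rotation n c)"
proof -
  define P where "P k = (\<Sum>j=1..k. a j)" for k
  have "n \<ge> 1"
    using assms by (cases n) auto
  define mn where "mn = Min (P ` {0..<n})"
  define M where "M = {k. k < n \<and> P k = mn}"
  define m where "m = Max M"
  have "mn \<in> P ` {0..<n}"
    unfolding mn_def using \<open>n \<ge> 1\<close> by (intro Min_in) auto
  then have "M \<noteq> {}"
    by (auto simp: M_def)
  then have "m \<in> M"
    unfolding m_def by (intro Max_in) (simp_all add: M_def)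
  then have "m < n" and Pm: "P m = mn"
    by (simp_all add: M_def)
  have min_P: "P m \<le> P k" if "k < n" for k
    unfolding Pm mn_def using that by (intro Min_le) auto
  have min_P_strict: "P m < P k" if "m < k" "k < n" for k
  proof -
    have "k \<notin> M"
      using that(1) Max_ge[of M k] unfolding m_def M_def by fastforce
    with that(2) min_P[OF that(2)] Pm show ?thesis
      by (auto simp: M_def)
  qed
  have "P m \<le> 0"
    using min_P[of 0] \<open>n \<ge> 1\<close> by (simp add: P_def)
  have "pos_vec n (a \<circ> rotation n m)"
    unfolding pos_vec_def
  proof
    fix i
    assume i: "i \<in> {1..n}"
    have "m + i - n < n"
      using i \<open>m < n\<close> by auto
    then show "(\<Sum>j=1..i. (a \<circ> rotation n m) j) > 0"
      using sum_rotation_prefix[OF \<open>m < n\<close>, of i a] i assms \<open>P m \<le> 0\<close>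
        min_P[of "m + i - n"] min_P_strict[of "m + i"]
      by (cases "m + i < n") (auto simp: P_def)
  qed
  with \<open>m < n\<close> show ?thesis by blast
qed

definition positive_split :: "nat set \<Rightarrow> (nat \<Rightarrow> real) \<Rightarrow> nat set \<Rightarrow> bool" where
  "positive_split A a J \<longleftrightarrow> J \<subseteq> A \<and> J \<noteq> {} \<and> J \<noteq> A \<and> sum a J > 0 \<and> sum a (A - J) > 0"

lemma positive_split_compose_permutation:
  assumes "\<tau> permutes A" "positive_split A (a \<circ> \<tau>) J"
  shows "positive_split A a (\<tau> ` J)"
proof -
  have "J \<subseteq> A" "J \<noteq> A"
    using assms(2) by (simp_all add: positive_split_def)
  have inj: "inj_on \<tau> B" for B
    using permutes_inj[OF assms(1)] by (simp add: inj_on_def inj_def)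
  have image_A: "\<tau> ` A = A"
    by (rule permutes_image[OF assms(1)])
  have complement: "A - \<tau> ` J = \<tau> ` (A - J)"
    using image_A permutes_inj[OF assms(1)] by (metis image_set_diff)
  have "\<tau> ` J \<subseteq> A"
    using \<open>J \<subseteq> A\<close> image_A by blast
  moreover have "\<tau> ` J \<noteq> A"
    using \<open>J \<noteq> A\<close> inj_image_eq_iff[OF permutes_inj[OF assms(1)]] image_A by metis
  moreover have "sum a (\<tau> ` J) = sum (a \<circ> \<tau>) J" "sum a (A - \<tau> ` J) = sum (a \<circ> \<tau>) (A - J)"
    unfolding complement by (simp_all add: sum.reindex[OF inj])
  ultimately show ?thesis
    using assms(2) unfolding positive_split_def by simp
qed

lemma positive_rotations_split:
  assumes "c < c'" "c' < n"
    and "pos_vec n (a \<circ> rotation n c)" "pos_vec n (a \<circ> rotation n c')"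
  shows "positive_split {1..n} a {c+1..c'}"
proof -
  define P where "P k = (\<Sum>j=1..k. a j)" for k
  have "c' - c \<in> {1..n}"
    using assms(1,2) by auto
  then have "(\<Sum>j=1..c'-c. a (rotation n c j)) > 0"
    using assms(3) unfolding pos_vec_def by auto
  then have inner: "P c' - P c > 0"
    using sum_rotation_prefix[of c n "c' - c" a] assms(1,2) by (simp add: P_def)
  have "n - c' + c \<in> {1..n}"
    using assms(1,2) by auto
  then have "(\<Sum>j=1..n-c'+c. a (rotation n c' j)) > 0"
    using assms(4) unfolding pos_vec_def by auto
  then have outer: "P n - P c' + P c > 0"
    using sum_rotation_prefix[of c' n "n - c' + c" a] assms(1,2)
    by (cases "c = 0") (auto simp: P_def)
  have block: "sum a {c+1..c'} = P c' - P c"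
    using sum.ub_add_nat[of 1 c a "c' - c"] assms(1) by (simp add: P_def)
  moreover have "sum a ({1..n} - {c+1..c'}) = P n - sum a {c+1..c'}"
    using assms(2) by (subst sum_diff) (auto simp: P_def)
  ultimately show ?thesis
    using assms(1,2) inner outer unfolding positive_split_def by auto
qed

lemma cycle_lemma:
  assumes "(\<Sum>j=1..n. a j) > 0" "\<And>J. \<not> positive_split {1..n} a J"
  shows "\<exists>!c. c < n \<and> pos_vec n (a \<circ> rotation n c)"
proof (rule ex_ex1I)
  show "\<exists>c. c < n \<and> pos_vec n (a \<circ> rotation n c)"
    using positive_rotation_exists[OF assms(1)] by blast
next
  fix c c'
  assume "c < n \<and> pos_vec n (a \<circ> rotation n c)" "c' < n \<and> pos_vec n (a \<circ> rotation n c')"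
  then show "c = c'"
    using positive_rotations_split[of c c' n a] positive_rotations_split[of c' c n a] assms(2)
    by (metis linorder_neqE_nat)
qed

lemma card_permutations_unique_rotation:
  assumes unique: "\<And>\<tau>. \<tau> permutes {1..n} \<Longrightarrow> \<exists>!c. c < n \<and> Q (\<tau> \<circ> rotation n c)"
  shows "card {\<pi>. \<pi> permutes {1..n} \<and> Q \<pi>} = fact (n - 1)"
proof -
  define G where "G = {\<pi>. \<pi> permutes {1..n} \<and> Q \<pi>}"
  define f :: "(nat \<Rightarrow> nat) \<times> nat \<Rightarrow> nat \<Rightarrow> nat"
    where "f = (\<lambda>(\<pi>, c). \<pi> \<circ> inv (rotation n c))"
  have "n \<noteq> 0"
    using unique[OF permutes_id] by auto
  have f_permutes: "f (\<pi>, c) permutes {1..n}" if "\<pi> permutes {1..n}" "c < n" for \<pi> c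
    unfolding f_def using permutes_compose[OF permutes_inv[OF rotation_permutes[OF that(2)]] that(1)]
    by simp
  have unrotate: "f (\<pi>, c) \<circ> rotation n c = \<pi>" if "c < n" for \<pi> c
    using permutes_inverses(2)[OF rotation_permutes[OF that]] by (auto simp: f_def fun_eq_iff)
  have "inj_on f (G \<times> {0..<n})"
  proof (rule inj_onI)
    fix x y
    assume "x \<in> G \<times> {0..<n}" "y \<in> G \<times> {0..<n}" "f x = f y"
    then obtain \<pi> c \<pi>' c' where x: "x = (\<pi>, c)" and y: "y = (\<pi>', c')"
      and in_G: "\<pi> \<in> G" "\<pi>' \<in> G" and "c < n" "c' < n" and eq: "f (\<pi>, c) = f (\<pi>', c')"
      by auto
    have "f (\<pi>, c) permutes {1..n}"
      using in_G f_permutes \<open>c < n\<close> by (simp add: G_def)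
    moreover have "Q (f (\<pi>, c) \<circ> rotation n c)"
      using unrotate[OF \<open>c < n\<close>] in_G by (simp add: G_def)
    moreover have "Q (f (\<pi>, c) \<circ> rotation n c')"
      using unrotate[OF \<open>c' < n\<close>] eq in_G by (simp add: G_def)
    ultimately have "c = c'"
      using unique \<open>c < n\<close> \<open>c' < n\<close> by blast
    with eq unrotate[OF \<open>c < n\<close>] show "x = y"
      unfolding x y by metis
  qed
  moreover have "f ` (G \<times> {0..<n}) = {\<tau>. \<tau> permutes {1..n}}"
  proof safe
    fix \<pi> c
    assume "\<pi> \<in> G" "c \<in> {0..<n}"
    then show "f (\<pi>, c) permutes {1..n}"
      using f_permutes by (simp add: G_def)
  next
    fix \<tau>
    assume "\<tau> permutes {1..n}"
    then obtain c where c: "c < n" "Q (\<tau> \<circ> rotation n c)"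
      using unique by blast
    have "f (\<tau> \<circ> rotation n c, c) = \<tau>"
      using permutes_inverses(1)[OF rotation_permutes[OF c(1)]] by (auto simp: f_def fun_eq_iff)
    moreover have "\<tau> \<circ> rotation n c \<in> G"
      using c \<open>\<tau> permutes {1..n}\<close> permutes_compose[OF rotation_permutes[OF c(1)]]
      by (simp add: G_def)
    ultimately show "\<tau> \<in> f ` (G \<times> {0..<n})"
      using c(1) by force
  qed
  ultimately have "card G * n = fact n"
    using card_image[of f "G \<times> {0..<n}"] card_permutations[of "{1..n}" n]
    by (simp add: card_cartesian_product)
  also have "\<dots> = fact (n - 1) * n"
    using \<open>n \<noteq> 0\<close> by (simp add: fact_reduce)
  finally show ?thesis
    using \<open>n \<noteq> 0\<close> unfolding G_def by simp
qed

lemma card_S_set: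
  "card (S_set n lam) = card {\<pi>. \<pi> permutes {1..n} \<and> pos_vec n (lam \<circ> \<pi>)}"
proof (rule bij_betw_same_card[of inv], rule bij_betw_byWitness[where f' = inv])
  show "inv ` S_set n lam \<subseteq> {\<pi>. \<pi> permutes {1..n} \<and> pos_vec n (lam \<circ> \<pi>)}"
    by (auto simp: S_set_def perm_act_def permutes_inv comp_def)
  show "inv ` {\<pi>. \<pi> permutes {1..n} \<and> pos_vec n (lam \<circ> \<pi>)} \<subseteq> S_set n lam"
    by (auto simp: S_set_def perm_act_def permutes_inv permutes_inv_inv comp_def)
qed (auto simp: S_set_def permutes_inv_inv)

theorem mainTheorem13:
  fixes n :: nat and lam :: "nat \<Rightarrow> real"
  assumes "(\<Sum>i=1..n. lam i) > 0"
    and "\<not> (\<exists>I1 I2. I1 \<noteq> {} \<and> I2 \<noteq> {} \<and> I1 \<union> I2 = {1..n} \<and> I1 \<inter> I2 = {}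
               \<and> s_sum I1 lam > 0 \<and> s_sum I2 lam > 0)"
  shows "card (S_set n lam) = fact (n - 1)"
proof -
  have no_split: "\<not> positive_split {1..n} lam J" for J
  proof
    assume "positive_split {1..n} lam J"
    then have "J \<noteq> {}" "{1..n} - J \<noteq> {}" "J \<union> ({1..n} - J) = {1..n}" "J \<inter> ({1..n} - J) = {}"
      "s_sum J lam > 0" "s_sum ({1..n} - J) lam > 0"
      unfolding positive_split_def s_sum_def by auto
    with assms(2) show False
      by blast
  qed
  have "\<exists>!c. c < n \<and> pos_vec n (lam \<circ> (\<tau> \<circ> rotation n c))" if "\<tau> permutes {1..n}" for \<tau>
  proof -
    have "(\<Sum>j=1..n. (lam \<circ> \<tau>) j) > 0"
      using assms(1) sum.permute[OF that, of lam] by simp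
    moreover have "\<not> positive_split {1..n} (lam \<circ> \<tau>) J" for J
      using no_split positive_split_compose_permutation[OF that] by blast
    ultimately show ?thesis
      using cycle_lemma[where a = "lam \<circ> \<tau>"] by (simp add: o_assoc)
  qed
  then have "card {\<pi>. \<pi> permutes {1..n} \<and> pos_vec n (lam \<circ> \<pi>)} = fact (n - 1)"
    by (rule card_permutations_unique_rotation)
  then show ?thesis
    by (simp only: card_S_set)
qed

end
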